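(* For rankings $\succ$, $R$ and $R'$ on a finite set $\mathcal{X}$, the following are equivalent: (1) $R$ is more aligned with $\succ$ than $R'$; (2) for every non-empty $X\subseteq\mathcal{X}$, the $R$-highest alternative in $X$ is identical to or $\succ$-better than the $R'$-highest alternative in $X$.
   Context: A ranking on $\mathcal{X}$ is an irreflexive, transitive and total binary relation. $R$ is more aligned with $\succ$ than $R'$ if for all $x,y\in\mathcal{X}$ with $x\succ y$, $xR'y$ implies $xRy$. The $R$-highest alternative in $X$ is the $x\in X$ with $xRy$ for all $y\in X\setminus\{x\}$. *)

theory Defs
  imports Main
begin

definition ranking :: "'a set \<Rightarrow> ('a \<Rightarrow> 'a \<Rightarrow> bool) \<Rightarrow> bool" where
  "ranking A R \<longleftrightarrow>
     (\<forall>x\<in>A. \<not> R x x) \<and>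
     (\<forall>x\<in>A. \<forall>y\<in>A. \<forall>z\<in>A. R x y \<longrightarrow> R y z \<longrightarrow> R x z) \<and>
     (\<forall>x\<in>A. \<forall>y\<in>A. x \<noteq> y \<longrightarrow> R x y \<or> R y x)"

definition more_aligned :: "'a set \<Rightarrow> ('a \<Rightarrow> 'a \<Rightarrow> bool) \<Rightarrow> ('a \<Rightarrow> 'a \<Rightarrow> bool)
     \<Rightarrow> ('a \<Rightarrow> 'a \<Rightarrow> bool) \<Rightarrow> bool" where
  "more_aligned A P R R' \<longleftrightarrow> (\<forall>x\<in>A. \<forall>y\<in>A. P x y \<longrightarrow> R' x y \<longrightarrow> R x y)"

definition highest :: "('a \<Rightarrow> 'a \<Rightarrow> bool) \<Rightarrow> 'a set \<Rightarrow> 'a" where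
  "highest R X = (THE x. x \<in> X \<and> (\<forall>y\<in>X - {x}. R x y))"

end

theory Submission
  imports Defs
begin

text \<open>Both directions reduce to comparing two alternatives. If the \<open>R\<close>-top \<open>a\<close> and the
  \<open>R'\<close>-top \<open>b\<close> of \<open>X\<close> differ with \<open>b \<succ> a\<close>, then \<open>b R' a\<close>, so alignment forces \<open>b R a\<close>,
  contradicting that \<open>a\<close> is \<open>R\<close>-highest. Conversely, if \<open>x \<succ> y\<close> and \<open>x R' y\<close>, then \<open>x\<close> is the
  \<open>R'\<close>-highest alternative of \<open>{x, y}\<close>, and the \<open>R\<close>-highest one can only be \<open>x\<close> itself,
  i.e. \<open>x R y\<close>.\<close>

lemma ranking_irrefl: "ranking A R \<Longrightarrow> x \<in> A \<Longrightarrow> \<not> R x x"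
  unfolding ranking_def by blast

lemma ranking_trans:
  "ranking A R \<Longrightarrow> x \<in> A \<Longrightarrow> y \<in> A \<Longrightarrow> z \<in> A \<Longrightarrow> R x y \<Longrightarrow> R y z \<Longrightarrow> R x z"
  unfolding ranking_def by blast

lemma ranking_total: "ranking A R \<Longrightarrow> x \<in> A \<Longrightarrow> y \<in> A \<Longrightarrow> x \<noteq> y \<Longrightarrow> R x y \<or> R y x"
  unfolding ranking_def by blast

lemma ranking_asym: "ranking A R \<Longrightarrow> x \<in> A \<Longrightarrow> y \<in> A \<Longrightarrow> R x y \<Longrightarrow> \<not> R y x"
  using ranking_irrefl ranking_trans by metis

lemma ranking_has_highest:
  assumes "ranking A R" "finite X" "X \<noteq> {}" "X \<subseteq> A"
  shows "\<exists>x\<in>X. \<forall>y\<in>X - {x}. R x y"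
  using assms(2-4)
proof (induction X rule: finite_ne_induct)
  case (singleton x)
  then show ?case by simp
next
  case (insert a F)
  then have "a \<in> A" "F \<subseteq> A" by auto
  obtain x where x: "x \<in> F" "\<forall>y\<in>F - {x}. R x y"
    using insert.IH[OF \<open>F \<subseteq> A\<close>] by blast
  have "x \<in> A" "a \<noteq> x"
    using x(1) \<open>F \<subseteq> A\<close> insert.hyps(3) by auto
  show ?case
  proof (cases "R x a")
    case True
    then show ?thesis using x by blast
  next
    case False
    then have "R a x"
      using ranking_total[OF assms(1) \<open>a \<in> A\<close> \<open>x \<in> A\<close> \<open>a \<noteq> x\<close>] by blast
    have "R a y" if "y \<in> F" for y
    proof (cases "y = x")
      case False
      with x that have "R x y" by blast
      with \<open>R a x\<close> show ?thesis
        using ranking_trans[OF assms(1) \<open>a \<in> A\<close> \<open>x \<in> A\<close>] that \<open>F \<subseteq> A\<close> by blast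
    qed (use \<open>R a x\<close> in simp)
    then show ?thesis by blast
  qed
qed

lemma ranking_highest_unique:
  assumes "ranking A R" "X \<subseteq> A"
    and "x \<in> X" "\<forall>y\<in>X - {x}. R x y"
    and "z \<in> X" "\<forall>y\<in>X - {z}. R z y"
  shows "z = x"
  using assms ranking_asym[OF assms(1)] by blast

lemma highest_eqI:
  assumes "ranking A R" "X \<subseteq> A" "x \<in> X" "\<forall>y\<in>X - {x}. R x y"
  shows "highest R X = x"
  unfolding highest_def
proof (rule the_equality)
  show "x \<in> X \<and> (\<forall>y\<in>X - {x}. R x y)" using assms(3,4) ..
qed (use ranking_highest_unique[OF assms] in blast)

lemma highest_in_and_greater:
  assumes "ranking A R" "finite X" "X \<noteq> {}" "X \<subseteq> A"
  shows "highest R X \<in> X" "\<forall>y\<in>X - {highest R X}. R (highest R X) y"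
proof -
  obtain x where "x \<in> X" "\<forall>y\<in>X - {x}. R x y"
    using ranking_has_highest[OF assms] by blast
  moreover from this have "highest R X = x"
    by (rule highest_eqI[OF assms(1,4)])
  ultimately show "highest R X \<in> X" "\<forall>y\<in>X - {highest R X}. R (highest R X) y"
    by simp_all
qed

lemma highest_pair:
  assumes "ranking A R" "x \<in> A" "y \<in> A" "R x y"
  shows "highest R {x, y} = x"
  using assms by (intro highest_eqI[OF assms(1)]) auto

lemma more_aligned_imp_highest_better:
  assumes "ranking A P" "ranking A R" "ranking A R'" "more_aligned A P R R'"
    and "finite X" "X \<noteq> {}" "X \<subseteq> A"
  shows "highest R X = highest R' X \<or> P (highest R X) (highest R' X)"
proof (rule ccontr)
  let ?a = "highest R X" and ?b = "highest R' X"
  assume differ: "\<not> (?a = ?b \<or> P ?a ?b)"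
  note a = highest_in_and_greater[OF assms(2,5-7)]
  note b = highest_in_and_greater[OF assms(3,5-7)]
  have A: "?a \<in> A" "?b \<in> A"
    using a(1) b(1) assms(7) by auto
  have "?b \<in> X - {?a}" "?a \<in> X - {?b}"
    using a(1) b(1) differ by auto
  then have "R ?a ?b" "R' ?b ?a"
    using a(2) b(2) by blast+
  moreover have "P ?b ?a"
    using ranking_total[OF assms(1) A] differ by blast
  ultimately have "R ?b ?a"
    using A assms(4) unfolding more_aligned_def by blast
  then show False
    using ranking_asym[OF assms(2) A] \<open>R ?a ?b\<close> by blast
qed

lemma highest_better_imp_more_aligned:
  assumes "ranking A P" "ranking A R" "ranking A R'"
    and better: "\<And>X. X \<subseteq> A \<Longrightarrow> X \<noteq> {} \<Longrightarrow>
                   highest R X = highest R' X \<or> P (highest R X) (highest R' X)"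
  shows "more_aligned A P R R'"
  unfolding more_aligned_def
proof (intro ballI impI)
  fix x y assume "x \<in> A" "y \<in> A" "P x y" "R' x y"
  let ?X = "{x, y}"
  have X: "finite ?X" "?X \<noteq> {}" "?X \<subseteq> A"
    using \<open>x \<in> A\<close> \<open>y \<in> A\<close> by auto
  have "x \<noteq> y"
    using ranking_irrefl[OF assms(1) \<open>x \<in> A\<close>] \<open>P x y\<close> by blast
  have "\<not> P y x"
    using ranking_asym[OF assms(1) \<open>x \<in> A\<close> \<open>y \<in> A\<close> \<open>P x y\<close>] .
  moreover have "highest R' ?X = x"
    using highest_pair[OF assms(3) \<open>x \<in> A\<close> \<open>y \<in> A\<close> \<open>R' x y\<close>] .
  moreover have "highest R ?X \<in> ?X"
    using highest_in_and_greater(1)[OF assms(2) X] .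
  ultimately have "highest R ?X = x"
    using better[OF X(3,2)] by auto
  then show "R x y"
    using highest_in_and_greater(2)[OF assms(2) X] \<open>x \<noteq> y\<close> by auto
qed

theorem mainTheorem13:
  fixes A :: "'a set" and P R R' :: "'a \<Rightarrow> 'a \<Rightarrow> bool"
  assumes "finite A"
    and "ranking A P" and "ranking A R" and "ranking A R'"
  shows "more_aligned A P R R' \<longleftrightarrow>
         (\<forall>X. X \<subseteq> A \<and> X \<noteq> {} \<longrightarrow>
              highest R X = highest R' X \<or> P (highest R X) (highest R' X))"
proof
  assume "more_aligned A P R R'"
  then show "\<forall>X. X \<subseteq> A \<and> X \<noteq> {} \<longrightarrow>
               highest R X = highest R' X \<or> P (highest R X) (highest R' X)"
    using more_aligned_imp_highest_better[OF assms(2-4)] finite_subset[OF _ assms(1)]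
    by blast
qed (use highest_better_imp_more_aligned[OF assms(2-4)] in blast)

end
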